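(* Let $\lambda=(\lambda_1,\ldots,\lambda_\ell)$ be a partition with $\ell$ positive parts, and let $n\geq\ell$. If there exists $p\in\{1,\ldots,\ell-2\}$ such that $\lambda_p>\lambda_{p+1}\geq\lambda_{p+2}\geq 2$, then the poset $\mathcal B_\lambda^n$ is not a lattice.
   Context: For $N\geq 1$ and a partition $\nu$ with at most $N$ positive parts, $\mathcal B_\nu^N$ is the set of semistandard Young tableaux of shape $\nu$ (rows weakly increasing, columns strictly increasing) with entries in $\{1,\ldots,N+1\}$, partially ordered by the reflexive transitive closure of $T<F_i(T)$ for $i\in\{1,\ldots,N\}$ with $F_i(T)\neq 0$. Here $F_i$ is the type A crystal lowering operator: in the reading word of $T$ (rows read from bottom to top, each row left to right) keep only letters $i$ and $i+1$, replace each $i$ by ")" and each $i+1$ by "(", and match parentheses in the usual way; if there is no unmatched ")", $F_i(T)=0$; otherwise $F_i(T)$ is obtained by changing the entry $i$ corresponding to the rightmost unmatched ")" into $i+1$. *)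

theory Defs
  imports Main
begin

definition is_partition :: "nat list \<Rightarrow> bool" where
  "is_partition lam \<longleftrightarrow> sorted_wrt (\<ge>) lam \<and> (\<forall>x\<in>set lam. 0 < x)"

text \<open>A tableau is a list of rows (row 0 is the top row, English convention).
  SSYT of shape nu with entries in {1..N+1}.\<close>
definition is_ssyt :: "nat \<Rightarrow> nat list \<Rightarrow> nat list list \<Rightarrow> bool" where
  "is_ssyt N nu T \<longleftrightarrow>
     length T = length nu \<and>
     (\<forall>r < length nu. length (T ! r) = nu ! r) \<and>
     (\<forall>r < length nu. sorted (T ! r)) \<and>
     (\<forall>r < length nu. \<forall>x \<in> set (T ! r). 1 \<le> x \<and> x \<le> N + 1) \<and>
     (\<forall>r c. Suc r < length nu \<longrightarrow> c < nu ! Suc r \<longrightarrow> T ! r ! c < T ! Suc r ! c)"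

definition B :: "nat list \<Rightarrow> nat \<Rightarrow> nat list list set" where
  "B nu N = {T. is_ssyt N nu T}"

definition reading_word :: "nat list list \<Rightarrow> nat list" where
  "reading_word T = concat (rev T)"

text \<open>Positions (in the word, 0-indexed, offset k) of unmatched ")" (letters i),
  where each letter i+1 is "(" and each letter i is ")"; parentheses are matched
  in the usual way (scanning left to right; c counts currently unmatched "(").\<close>
fun unmatched_close :: "nat \<Rightarrow> nat \<Rightarrow> nat \<Rightarrow> nat list \<Rightarrow> nat list" where
  "unmatched_close i c k [] = []"
| "unmatched_close i c k (x # xs) =
     (if x = i + 1 then unmatched_close i (c + 1) (Suc k) xs
      else if x = i then
        (if 0 < c then unmatched_close i (c - 1) (Suc k) xs
         else k # unmatched_close i c (Suc k) xs)
      else unmatched_close i c (Suc k) xs)"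

text \<open>Lowering operator on words; None plays the role of 0.\<close>
definition F_word :: "nat \<Rightarrow> nat list \<Rightarrow> nat list option" where
  "F_word i w = (let u = unmatched_close i 0 0 w in
                 if u = [] then None else Some (w[last u := i + 1]))"

fun split_lengths :: "nat list \<Rightarrow> 'a list \<Rightarrow> 'a list list" where
  "split_lengths [] w = []"
| "split_lengths (n # ns) w = take n w # split_lengths ns (drop n w)"

text \<open>Lowering operator on tableaux: apply F_word to the reading word and put
  the letters back into the same cells.\<close>
definition F_tab :: "nat \<Rightarrow> nat list list \<Rightarrow> nat list list option" where
  "F_tab i T = map_option (\<lambda>w. rev (split_lengths (rev (map length T)) w))
                          (F_word i (reading_word T))"

definition crystal_step :: "nat list \<Rightarrow> nat \<Rightarrow> (nat list list \<times> nat list list) set" where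
  "crystal_step nu N = {(T, T'). T \<in> B nu N \<and> (\<exists>i \<in> {1..N}. F_tab i T = Some T')}"

definition crystal_le :: "nat list \<Rightarrow> nat \<Rightarrow> nat list list \<Rightarrow> nat list list \<Rightarrow> bool" where
  "crystal_le nu N T T' \<longleftrightarrow> T \<in> B nu N \<and> T' \<in> B nu N \<and> (T, T') \<in> (crystal_step nu N)\<^sup>*"

definition is_lub_in :: "'a set \<Rightarrow> ('a \<Rightarrow> 'a \<Rightarrow> bool) \<Rightarrow> 'a \<Rightarrow> 'a \<Rightarrow> 'a \<Rightarrow> bool" where
  "is_lub_in A le x y z \<longleftrightarrow> z \<in> A \<and> le x z \<and> le y z \<and>
     (\<forall>u\<in>A. le x u \<longrightarrow> le y u \<longrightarrow> le z u)"

definition is_glb_in :: "'a set \<Rightarrow> ('a \<Rightarrow> 'a \<Rightarrow> bool) \<Rightarrow> 'a \<Rightarrow> 'a \<Rightarrow> 'a \<Rightarrow> bool" where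
  "is_glb_in A le x y z \<longleftrightarrow> z \<in> A \<and> le z x \<and> le z y \<and>
     (\<forall>u\<in>A. le u x \<longrightarrow> le u y \<longrightarrow> le u z)"

definition is_lattice_on :: "'a set \<Rightarrow> ('a \<Rightarrow> 'a \<Rightarrow> bool) \<Rightarrow> bool" where
  "is_lattice_on A le \<longleftrightarrow>
     (\<forall>x\<in>A. \<forall>y\<in>A. (\<exists>z. is_lub_in A le x y z) \<and> (\<exists>z. is_glb_in A le x y z))"

end

theory Submission
  imports Defs
begin

text \<open>Write p = k + 1 and fill every row outside the window of rows k, k+1, k+2 (counted from 0)
  with a constant letter, so that the operators F_{k+1}, F_{k+2}, F_{k+3} see only the window.
  There we exhibit tableaux x and y with two common lower bounds m1 and m2 such that every cell
  of x is the larger of the corresponding cells of m1 and m2. Lowering operators only raise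
  entries, so the crystal order refines the cellwise order, and a meet z of x and y would satisfy
  m1, m2 \<le> z \<le> x cellwise, forcing z = x \<le> y. But y arises from x by raising a single cell
  that no operator applicable to x raises, while the first step of any chain starting at x raises
  some other cell for good; hence x is not below y.\<close>

section \<open>Parenthesis matching\<close>

lemma unmatched_close_append_skip:
  "\<forall>x\<in>set xs. x \<noteq> i \<and> x \<noteq> Suc i \<Longrightarrow>
   unmatched_close i c j (xs @ ys) = unmatched_close i c (j + length xs) ys"
  by (induction xs arbitrary: j) auto

lemma unmatched_close_replicate_skip:
  "v \<noteq> i \<Longrightarrow> v \<noteq> Suc i \<Longrightarrow>
   unmatched_close i c j (replicate m v @ ys) = unmatched_close i c (j + m) ys"
  by (simp add: unmatched_close_append_skip)

lemma unmatched_close_replicate_open: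
  "v = Suc i \<Longrightarrow>
   unmatched_close i c j (replicate m v @ ys) = unmatched_close i (c + m) (j + m) ys"
  by (induction m arbitrary: c j) auto

lemma unmatched_close_replicate_matched:
  "v = i \<Longrightarrow> m \<le> c \<Longrightarrow>
   unmatched_close i c j (replicate m v @ ys) = unmatched_close i (c - m) (j + m) ys"
  by (induction m arbitrary: c j) auto

lemma unmatched_close_replicate_unmatched:
  "v = i \<Longrightarrow> c \<le> m \<Longrightarrow>
   unmatched_close i c j (replicate m v @ ys) = [j + c..<j + m] @ unmatched_close i 0 (j + m) ys"
proof (induction m arbitrary: c j)
  case (Suc m)
  then show ?case
    by (cases c) (auto simp: upt_rec[of j] Suc.IH[of 0 "Suc j"] Suc.IH[of "c - 1" "Suc j"])
qed simp

lemma unmatched_close_no_close: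
  "\<forall>x\<in>set xs. x \<noteq> i \<Longrightarrow> unmatched_close i c j xs = []"
  by (induction xs arbitrary: c j) auto

lemma unmatched_close_nth:
  "jj \<in> set (unmatched_close i c j xs) \<Longrightarrow>
   j \<le> jj \<and> jj < j + length xs \<and> xs ! (jj - j) = i"
proof (induction xs arbitrary: c j)
  case (Cons x xs)
  then show ?case
    by (fastforce simp: nth_Cons' split: if_splits)
qed simp

section \<open>Lowering operators raise one cell\<close>

lemma split_lengths_concat: "split_lengths (map length Rs) (concat Rs) = Rs"
  by (induction Rs) auto

lemma concat_split_lengths: "length w = sum_list ns \<Longrightarrow> concat (split_lengths ns w) = w"
  by (induction ns arbitrary: w) (auto simp: min_def)

lemma map_length_split_lengths: "length w = sum_list ns \<Longrightarrow> map length (split_lengths ns w) = ns"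
  by (induction ns arbitrary: w) (auto simp: min_def)

lemma list_all2_split_lengths:
  "list_all2 P (concat Rs) w \<Longrightarrow> list_all2 (list_all2 P) Rs (split_lengths (map length Rs) w)"
proof (induction Rs arbitrary: w)
  case (Cons r Rs)
  then obtain w1 w2 where "w = w1 @ w2" "list_all2 P r w1" "list_all2 P (concat Rs) w2"
    by (auto simp: list_all2_append1)
  with Cons.IH show ?case by (simp add: list_all2_lengthD)
qed simp

lemma list_all2_concat:
  "list_all2 (list_all2 P) Xs Ys \<Longrightarrow> list_all2 P (concat Xs) (concat Ys)"
  by (induction rule: list_all2_induct) (auto intro: list_all2_appendI)

lemma F_tab_eq_SomeI:
  assumes "F_word i (reading_word T) = Some (reading_word T')"
    and "map length T' = map length T"
  shows "F_tab i T = Some T'"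
proof -
  have "rev (split_lengths (rev (map length T)) (reading_word T')) = T'"
    using split_lengths_concat[of "rev T'"] assms(2) unfolding reading_word_def
    by (metis rev_map rev_rev_ident)
  then show ?thesis using assms(1) unfolding F_tab_def by simp
qed

lemma F_tab_eq_SomeD:
  assumes "F_tab i T = Some T'"
  obtains j where "j < length (reading_word T)" "reading_word T ! j = i"
    "reading_word T' = (reading_word T)[j := Suc i]" "map length T' = map length T"
proof -
  define w where "w = reading_word T"
  define u where "u = unmatched_close i 0 0 w"
  from assms have "u \<noteq> []"
    and T': "T' = rev (split_lengths (rev (map length T)) (w[last u := Suc i]))"
    unfolding F_tab_def F_word_def u_def w_def Let_def by (auto split: if_splits)
  then have j: "last u < length w" "w ! last u = i"
    using unmatched_close_nth[of "last u" i 0 0 w] unfolding u_def by auto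
  have len: "length (w[last u := Suc i]) = sum_list (rev (map length T))"
    by (simp add: w_def reading_word_def length_concat sum_list_rev rev_map)
  have "reading_word T' = w[last u := Suc i]"
    unfolding T' reading_word_def using concat_split_lengths[OF len] by simp
  moreover have "map length T' = map length T"
    unfolding T' using map_length_split_lengths[OF len] by (metis rev_map rev_rev_ident)
  ultimately show thesis using that j unfolding w_def by blast
qed

lemma F_tab_raise_block_end:
  assumes "reading_word T = X @ replicate (Suc m) i @ Y"
    and "reading_word T' = X @ replicate m i @ Suc i # Y"
    and "map length T' = map length T"
    and "unmatched_close i 0 0 (reading_word T) = us @ [length X + m]"
  shows "F_tab i T = Some T'"
proof (rule F_tab_eq_SomeI[OF _ assms(3)])
  have "(X @ replicate (Suc m) i @ Y)[length X + m := Suc i] = X @ replicate m i @ Suc i # Y"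
    by (simp add: list_update_append replicate_append_same[symmetric])
  then show "F_word i (reading_word T) = Some (reading_word T')"
    unfolding F_word_def assms(4) using assms(1,2) by simp
qed

definition cellwise_le :: "nat list list \<Rightarrow> nat list list \<Rightarrow> bool" where
  "cellwise_le T T' \<longleftrightarrow> list_all2 (list_all2 (\<le>)) T T'"

lemma cellwise_le_refl: "cellwise_le T T"
  unfolding cellwise_le_def by (simp add: list_all2_refl)

lemma cellwise_le_trans: "cellwise_le T T' \<Longrightarrow> cellwise_le T' T'' \<Longrightarrow> cellwise_le T T''"
  unfolding cellwise_le_def
  by (rule list_all2_trans[OF list_all2_trans[OF order_trans]])

lemma cellwise_le_reading_word:
  "cellwise_le T T' \<Longrightarrow> list_all2 (\<le>) (reading_word T) (reading_word T')"
  unfolding cellwise_le_def reading_word_def by (simp add: list_all2_concat list_all2_rev)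

lemma F_tab_cellwise_le:
  assumes "F_tab i T = Some T'"
  shows "cellwise_le T T'"
proof -
  obtain j where j: "j < length (reading_word T)" "reading_word T ! j = i"
    and w: "reading_word T' = (reading_word T)[j := Suc i]" and l: "map length T' = map length T"
    using F_tab_eq_SomeD[OF assms] .
  have "list_all2 (\<le>) (concat (rev T)) (reading_word T')"
    using j w unfolding reading_word_def by (auto simp: list_all2_conv_all_nth nth_list_update)
  then have "list_all2 (list_all2 (\<le>)) (rev T)
      (split_lengths (map length (rev T)) (reading_word T'))"
    by (rule list_all2_split_lengths)
  moreover have "split_lengths (map length (rev T)) (reading_word T') = rev T'"
    using split_lengths_concat[of "rev T'"] l unfolding reading_word_def by (metis rev_map)
  ultimately show ?thesis unfolding cellwise_le_def by (metis list_all2_rev rev_rev_ident)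
qed

lemma crystal_step_rtrancl_cellwise_le:
  "(T, T') \<in> (crystal_step nu N)\<^sup>* \<Longrightarrow> cellwise_le T T'"
proof (induction rule: rtrancl_induct)
  case (step T' T'')
  then obtain i where "F_tab i T' = Some T''" unfolding crystal_step_def by auto
  with step.IH show ?case by (meson F_tab_cellwise_le cellwise_le_trans)
qed (rule cellwise_le_refl)

lemma crystal_le_cellwise_le: "crystal_le nu N T T' \<Longrightarrow> cellwise_le T T'"
  unfolding crystal_le_def by (blast intro: crystal_step_rtrancl_cellwise_le)

lemma crystal_le_of_F_tab:
  "F_tab i T = Some T' \<Longrightarrow> i \<in> {1..N} \<Longrightarrow> T \<in> B nu N \<Longrightarrow> T' \<in> B nu N \<Longrightarrow>
   crystal_le nu N T T'"
  unfolding crystal_le_def crystal_step_def by blast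

lemma crystal_le_trans [trans]:
  "crystal_le nu N T T' \<Longrightarrow> crystal_le nu N T' T'' \<Longrightarrow> crystal_le nu N T T''"
  unfolding crystal_le_def by auto

text \<open>The first step of a chain starting at x raises a cell other than j, and no cell ever
  decreases afterwards.\<close>
lemma not_crystal_le_if_stuck_cell:
  assumes wy: "reading_word y = (reading_word x)[j := v]"
    and j: "j < length (reading_word x)" "reading_word x ! j \<noteq> v"
    and stuck: "\<And>T. F_tab (reading_word x ! j) x = Some T \<Longrightarrow>
      reading_word T ! j = reading_word x ! j"
  shows "\<not> crystal_le nu N x y"
proof
  assume "crystal_le nu N x y"
  moreover have "x \<noteq> y" using wy j by (metis nth_list_update_eq)
  ultimately obtain T where step: "(x, T) \<in> crystal_step nu N"
    and rest: "(T, y) \<in> (crystal_step nu N)\<^sup>*"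
    unfolding crystal_le_def by (meson rtranclD tranclD)
  from step obtain i where Fi: "F_tab i x = Some T" unfolding crystal_step_def by blast
  have le: "list_all2 (\<le>) (reading_word T) (reading_word y)"
    using rest by (intro cellwise_le_reading_word crystal_step_rtrancl_cellwise_le)
  obtain j' where j': "j' < length (reading_word x)" "reading_word x ! j' = i"
    "reading_word T = (reading_word x)[j' := Suc i]"
    using F_tab_eq_SomeD[OF Fi] by blast
  show False
  proof (cases "j' = j")
    case True
    then show False using stuck Fi j' by force
  next
    case False
    then have "reading_word T ! j' = Suc i" "reading_word y ! j' = i" using j' wy by auto
    with le j' show False by (auto simp: list_all2_conv_all_nth)
  qed
qed

lemma cellwise_le_max_antisym:
  assumes "cellwise_le m1 z" "cellwise_le m2 z" "cellwise_le z x"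
    and "\<And>r c. r < length x \<Longrightarrow> c < length (x ! r) \<Longrightarrow>
      x ! r ! c \<le> max (m1 ! r ! c) (m2 ! r ! c)"
  shows "z = x"
proof (rule nth_equalityI)
  show "length z = length x" using assms(3) by (simp add: cellwise_le_def list_all2_lengthD)
  fix r assume r: "r < length z"
  have cells: "list_all2 (\<le>) (m1 ! r) (z ! r)" "list_all2 (\<le>) (m2 ! r) (z ! r)"
    "list_all2 (\<le>) (z ! r) (x ! r)"
    using assms(1-3) r unfolding cellwise_le_def list_all2_conv_all_nth by auto
  show "z ! r = x ! r"
  proof (rule nth_equalityI)
    show "length (z ! r) = length (x ! r)" using cells(3) by (rule list_all2_lengthD)
    fix c assume "c < length (z ! r)"
    with cells have "m1 ! r ! c \<le> z ! r ! c" "m2 ! r ! c \<le> z ! r ! c" "z ! r ! c \<le> x ! r ! c"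
      and "c < length (x ! r)"
      by (auto simp: list_all2_conv_all_nth)
    moreover have "r < length x" using r \<open>length z = length x\<close> by simp
    ultimately show "z ! r ! c = x ! r ! c" using assms(4)[of r c] by linarith
  qed
qed

lemma not_lattice_if_lower_bounds_cover:
  assumes "crystal_le nu N m1 x" "crystal_le nu N m1 y" "crystal_le nu N m2 x" "crystal_le nu N m2 y"
    and "\<And>r c. r < length x \<Longrightarrow> c < length (x ! r) \<Longrightarrow>
      x ! r ! c \<le> max (m1 ! r ! c) (m2 ! r ! c)"
    and "\<not> crystal_le nu N x y"
  shows "\<not> is_lattice_on (B nu N) (crystal_le nu N)"
proof
  assume "is_lattice_on (B nu N) (crystal_le nu N)"
  moreover have "x \<in> B nu N" "y \<in> B nu N" using assms(1,2) unfolding crystal_le_def by auto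
  ultimately obtain z where z: "is_glb_in (B nu N) (crystal_le nu N) x y z"
    unfolding is_lattice_on_def by blast
  have "m1 \<in> B nu N" "m2 \<in> B nu N" using assms(1,3) unfolding crystal_le_def by auto
  then have "crystal_le nu N m1 z" "crystal_le nu N m2 z" "crystal_le nu N z x"
    using z assms(1-4) unfolding is_glb_in_def by auto
  then have "z = x"
    using cellwise_le_max_antisym crystal_le_cellwise_le assms(5) by blast
  then show False using z assms(6) unfolding is_glb_in_def by simp
qed

section \<open>Tableaux with a three-row window\<close>

definition block_row :: "nat \<Rightarrow> nat \<Rightarrow> nat \<Rightarrow> nat \<Rightarrow> nat \<Rightarrow> nat list" where
  "block_row k a1 a2 a3 a4 =
     replicate a1 (k + 1) @ replicate a2 (k + 2) @ replicate a3 (k + 3) @ replicate a4 (k + 4)"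

definition rows_above :: "nat list \<Rightarrow> nat \<Rightarrow> nat list list" where
  "rows_above lam k = map (\<lambda>r. replicate (lam ! r) (Suc r)) [0..<k]"

definition rows_below :: "nat list \<Rightarrow> nat \<Rightarrow> nat list list" where
  "rows_below lam k = map (\<lambda>r. replicate (lam ! r) (r + 2)) [k + 3..<length lam]"

text \<open>Rows are indexed from 0, so the window rows k, k+1, k+2 are the rows p, p+1, p+2 of the
  paper for p = k+1. Outside the window every row is constant, with letters at most k above it
  and at least k+5 below it, so they are invisible to the operators F_{k+1}, F_{k+2}, F_{k+3}.\<close>
definition window_tableau :: "nat list \<Rightarrow> nat \<Rightarrow> nat \<Rightarrow> nat \<Rightarrow> nat \<Rightarrow> nat \<Rightarrow>
    nat \<Rightarrow> nat \<Rightarrow> nat \<Rightarrow> nat \<Rightarrow> nat \<Rightarrow> nat list list" where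
  "window_tableau lam k a1 a2 a3 a4 b2 b3 b4 c3 c4 =
     rows_above lam k @ [block_row k a1 a2 a3 a4, block_row k 0 b2 b3 b4, block_row k 0 0 c3 c4]
       @ rows_below lam k"

abbreviation word_below :: "nat list \<Rightarrow> nat \<Rightarrow> nat list" where
  "word_below lam k \<equiv> concat (rev (rows_below lam k))"

abbreviation word_above :: "nat list \<Rightarrow> nat \<Rightarrow> nat list" where
  "word_above lam k \<equiv> concat (rev (rows_above lam k))"

lemma reading_word_window_tableau:
  "reading_word (window_tableau lam k a1 a2 a3 a4 b2 b3 b4 c3 c4) =
     word_below lam k @ block_row k 0 0 c3 c4 @ block_row k 0 b2 b3 b4 @ block_row k a1 a2 a3 a4
       @ word_above lam k"
  unfolding reading_word_def window_tableau_def by simp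

lemma map_length_window_tableau:
  "map length (window_tableau lam k a1 a2 a3 a4 b2 b3 b4 c3 c4) =
     map length (rows_above lam k) @ [a1 + a2 + a3 + a4, b2 + b3 + b4, c3 + c4]
       @ map length (rows_below lam k)"
  unfolding window_tableau_def block_row_def by simp

lemma unmatched_close_word_below:
  "i \<le> k + 3 \<Longrightarrow> unmatched_close i c j (word_below lam k @ ys) =
     unmatched_close i c (j + length (word_below lam k)) ys"
  by (rule unmatched_close_append_skip) (auto simp: rows_below_def)

lemma unmatched_close_word_above:
  "k < i \<Longrightarrow> unmatched_close i c j (word_above lam k) = []"
  by (rule unmatched_close_no_close) (auto simp: rows_above_def)

lemmas window_bracketing_simps = reading_word_window_tableau map_length_window_tableau block_row_def
  unmatched_close_word_below unmatched_close_word_above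
  unmatched_close_replicate_skip unmatched_close_replicate_open
  unmatched_close_replicate_matched unmatched_close_replicate_unmatched upt_conv_Cons

lemma F_tab_window_top_1:
  assumes "b2 \<le> a1"
  shows "F_tab (k + 1) (window_tableau lam k (Suc a1) a2 a3 a4 b2 b3 b4 c3 c4)
    = Some (window_tableau lam k a1 (Suc a2) a3 a4 b2 b3 b4 c3 c4)"
proof (rule F_tab_raise_block_end[where m = a1
      and X = "word_below lam k @ block_row k 0 0 c3 c4 @ block_row k 0 b2 b3 b4"
      and Y = "replicate a2 (k + 2) @ replicate a3 (k + 3) @ replicate a4 (k + 4) @ word_above lam k"
      and us = "[length (word_below lam k) + c3 + c4 + b2 + b3 + b4 + b2..<
                 length (word_below lam k) + c3 + c4 + b2 + b3 + b4 + a1]"])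
qed (use assms in \<open>simp_all add: window_bracketing_simps add.assoc\<close>)

lemma F_tab_window_top_2:
  assumes "c3 \<le> b2" "b3 \<le> a2"
  shows "F_tab (k + 2) (window_tableau lam k a1 (Suc a2) a3 a4 b2 b3 b4 c3 c4)
    = Some (window_tableau lam k a1 a2 (Suc a3) a4 b2 b3 b4 c3 c4)"
proof (rule F_tab_raise_block_end[where m = a2
      and X = "word_below lam k @ block_row k 0 0 c3 c4 @ block_row k 0 b2 b3 b4 @ replicate a1 (k + 1)"
      and Y = "replicate a3 (k + 3) @ replicate a4 (k + 4) @ word_above lam k"
      and us = "[length (word_below lam k) + c3 + c4 + c3..<length (word_below lam k) + c3 + c4 + b2]
        @ [length (word_below lam k) + c3 + c4 + b2 + b3 + b4 + a1 + b3..<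
           length (word_below lam k) + c3 + c4 + b2 + b3 + b4 + a1 + a2]"])
qed (use assms in \<open>simp_all add: window_bracketing_simps add.assoc\<close>)

lemma F_tab_window_middle_2:
  assumes "c3 \<le> b2" "a2 \<le> b3"
  shows "F_tab (k + 2) (window_tableau lam k a1 a2 a3 a4 (Suc b2) b3 b4 c3 c4)
    = Some (window_tableau lam k a1 a2 a3 a4 b2 (Suc b3) b4 c3 c4)"
proof (rule F_tab_raise_block_end[where m = b2
      and X = "word_below lam k @ block_row k 0 0 c3 c4"
      and Y = "replicate b3 (k + 3) @ replicate b4 (k + 4) @ block_row k a1 a2 a3 a4 @ word_above lam k"
      and us = "[length (word_below lam k) + c3 + c4 + c3..<length (word_below lam k) + c3 + c4 + b2]"])
qed (use assms in \<open>simp_all add: window_bracketing_simps add.assoc\<close>)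

lemma F_tab_window_bottom_3:
  assumes "b3 \<le> c4" "a3 \<le> c4 - b3 + b4"
  shows "F_tab (k + 3) (window_tableau lam k a1 a2 a3 a4 b2 b3 b4 (Suc c3) c4)
    = Some (window_tableau lam k a1 a2 a3 a4 b2 b3 b4 c3 (Suc c4))"
proof (rule F_tab_raise_block_end[where m = c3
      and X = "word_below lam k"
      and Y = "replicate c4 (k + 4) @ block_row k 0 b2 b3 b4 @ block_row k a1 a2 a3 a4 @ word_above lam k"
      and us = "[length (word_below lam k)..<length (word_below lam k) + c3]"])
qed (use assms in \<open>simp_all add: window_bracketing_simps add.assoc\<close>)

lemma F_tab_window_top_3:
  assumes "b3 = c4" "b4 \<le> a3"
  shows "F_tab (k + 3) (window_tableau lam k a1 a2 (Suc a3) a4 b2 b3 b4 c3 c4)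
    = Some (window_tableau lam k a1 a2 a3 (Suc a4) b2 b3 b4 c3 c4)"
proof (rule F_tab_raise_block_end[where m = a3
      and X = "word_below lam k @ block_row k 0 0 c3 c4 @ block_row k 0 b2 b3 b4
        @ replicate a1 (k + 1) @ replicate a2 (k + 2)"
      and Y = "replicate a4 (k + 4) @ word_above lam k"
      and us = "[length (word_below lam k)..<length (word_below lam k) + c3]
        @ [length (word_below lam k) + c3 + c4 + b2 + b3 + b4 + a1 + a2 + b4..<
           length (word_below lam k) + c3 + c4 + b2 + b3 + b4 + a1 + a2 + a3]"])
qed (use assms in \<open>simp_all add: window_bracketing_simps add.assoc\<close>)

lemma nth_block_row:
  "c < a1 + a2 + a3 + a4 \<Longrightarrow> block_row k a1 a2 a3 a4 ! c =
    (if c < a1 then k + 1 else if c < a1 + a2 then k + 2 else if c < a1 + a2 + a3 then k + 3 else k + 4)"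
  unfolding block_row_def by (auto simp: nth_append)

lemma length_window_tableau:
  "k + 3 \<le> length lam \<Longrightarrow> length (window_tableau lam k a1 a2 a3 a4 b2 b3 b4 c3 c4) = length lam"
  unfolding window_tableau_def rows_above_def rows_below_def by simp

lemma nth_window_tableau:
  assumes "r < length lam" "k + 3 \<le> length lam"
  shows "window_tableau lam k a1 a2 a3 a4 b2 b3 b4 c3 c4 ! r =
    (if r < k then replicate (lam ! r) (Suc r)
     else if r = k then block_row k a1 a2 a3 a4
     else if r = k + 1 then block_row k 0 b2 b3 b4
     else if r = k + 2 then block_row k 0 0 c3 c4
     else replicate (lam ! r) (r + 2))"
proof -
  consider "r < k" | "k \<le> r" "r < k + 3" | d where "r = k + 3 + d" "d < length lam - (k + 3)"
    using assms by (metis add_diff_inverse_nat diff_less_mono not_less)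
  then show ?thesis
    by cases (auto simp: window_tableau_def rows_above_def rows_below_def nth_append)
qed

lemma partition_nth_mono:
  "is_partition lam \<Longrightarrow> r \<le> s \<Longrightarrow> s < length lam \<Longrightarrow> lam ! s \<le> lam ! r"
  unfolding is_partition_def by (metis le_eq_less_or_eq sorted_wrt_nth_less)

lemma window_tableau_in_B:
  assumes part: "is_partition lam" and len: "length lam \<le> n" and kl: "k + 3 \<le> length lam"
    and sa: "a1 + a2 + a3 + a4 = lam ! k" and sb: "b2 + b3 + b4 = lam ! (k + 1)"
    and sc: "c3 + c4 = lam ! (k + 2)"
    and h1: "b2 \<le> a1" and h2: "b2 + b3 \<le> a1 + a2" and h3: "lam ! (k + 1) \<le> a1 + a2 + a3"
    and h4: "c3 \<le> b2" and h5: "lam ! (k + 2) \<le> b2 + b3"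
  shows "window_tableau lam k a1 a2 a3 a4 b2 b3 b4 c3 c4 \<in> B lam n"
proof -
  define T where "T = window_tableau lam k a1 a2 a3 a4 b2 b3 b4 c3 c4"
  have nT: "\<And>r. r < length lam \<Longrightarrow> T ! r =
    (if r < k then replicate (lam ! r) (Suc r)
     else if r = k then block_row k a1 a2 a3 a4
     else if r = k + 1 then block_row k 0 b2 b3 b4
     else if r = k + 2 then block_row k 0 0 c3 c4
     else replicate (lam ! r) (r + 2))"
    unfolding T_def using kl by (simp add: nth_window_tableau)
  have columns: "T ! r ! c < T ! Suc r ! c" if r: "Suc r < length lam" and c: "c < lam ! Suc r" for r c
  proof -
    have mono: "lam ! Suc r \<le> lam ! r" using partition_nth_mono[OF part, of r "Suc r"] r by simp
    consider "Suc r < k" | "Suc r = k" | "r = k" | "r = k + 1" | "r = k + 2" | "k + 3 \<le> r"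
      by linarith
    then show ?thesis
      by cases (use nT r c mono sa sb sc h1 h2 h3 h4 h5 in \<open>auto simp: nth_block_row\<close>)
  qed
  have "length T = length lam" unfolding T_def using kl by (rule length_window_tableau)
  moreover have "\<forall>r < length lam. length (T ! r) = lam ! r \<and> sorted (T ! r) \<and>
      (\<forall>x \<in> set (T ! r). 1 \<le> x \<and> x \<le> n + 1)"
    using nT sa sb sc kl len by (auto simp: block_row_def sorted_append)
  ultimately show ?thesis
    unfolding B_def is_ssyt_def T_def[symmetric] using columns by blast
qed

section \<open>Two tableaux without a meet\<close>

locale nonlattice_window =
  fixes lam :: "nat list" and n k a b d :: nat
  assumes partition: "is_partition lam"
    and length_le: "length lam \<le> n"
    and window_fits: "k + 3 \<le> length lam"
    and parts: "lam ! k = a + b + d + 2" "lam ! (k + 1) = a + Suc b" "lam ! (k + 2) = Suc (Suc b)"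
    and a_pos: "0 < a"
begin

abbreviation W :: "nat \<Rightarrow> nat \<Rightarrow> nat \<Rightarrow> nat \<Rightarrow> nat \<Rightarrow> nat \<Rightarrow> nat \<Rightarrow> nat \<Rightarrow> nat \<Rightarrow>
    nat list list" where "W \<equiv> window_tableau lam k"

lemma W_in_B:
  assumes "a1 + a2 + a3 + a4 = lam ! k" "b2 + b3 + b4 = lam ! (k + 1)" "c3 + c4 = lam ! (k + 2)"
    "b2 \<le> a1" "b2 + b3 \<le> a1 + a2" "lam ! (k + 1) \<le> a1 + a2 + a3"
    "c3 \<le> b2" "lam ! (k + 2) \<le> b2 + b3"
  shows "W a1 a2 a3 a4 b2 b3 b4 c3 c4 \<in> B lam n"
  using window_tableau_in_B[OF partition length_le window_fits] assms by blast

lemma W_le_of_F_tab: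
  assumes "F_tab i (W a1 a2 a3 a4 b2 b3 b4 c3 c4) = Some (W a1' a2' a3' a4' b2' b3' b4' c3' c4')"
    and "i \<in> {k + 1, k + 2, k + 3}"
    and "W a1 a2 a3 a4 b2 b3 b4 c3 c4 \<in> B lam n" "W a1' a2' a3' a4' b2' b3' b4' c3' c4' \<in> B lam n"
  shows "crystal_le lam n (W a1 a2 a3 a4 b2 b3 b4 c3 c4) (W a1' a2' a3' a4' b2' b3' b4' c3' c4')"
  using crystal_le_of_F_tab[OF assms(1) _ assms(3,4)] assms(2) window_fits length_le by auto

definition tab_x :: "nat list list" where
  "tab_x = W a (Suc b) (Suc 0) d a (Suc b) 0 (Suc 0) (Suc b)"
definition tab_y :: "nat list list" where
  "tab_y = W a (Suc b) (Suc 0) d a (Suc b) 0 0 (Suc (Suc b))"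
definition tab_m1 :: "nat list list" where
  "tab_m1 = W (Suc a) b (Suc 0) d (Suc a) b 0 (Suc 0) (Suc b)"
definition tab_m2 :: "nat list list" where
  "tab_m2 = W a (Suc (Suc b)) 0 d a (Suc b) 0 (Suc 0) (Suc b)"

lemma tab_m1_le_tab_x: "crystal_le lam n tab_m1 tab_x"
proof -
  have "crystal_le lam n tab_m1 (W (Suc a) b (Suc 0) d a (Suc b) 0 (Suc 0) (Suc b))"
    unfolding tab_m1_def
    by (rule W_le_of_F_tab[OF F_tab_window_middle_2]) (use parts a_pos in \<open>auto intro!: W_in_B\<close>)
  also have "crystal_le lam n \<dots> tab_x"
    unfolding tab_x_def
    by (rule W_le_of_F_tab[OF F_tab_window_top_1]) (use parts a_pos in \<open>auto intro!: W_in_B\<close>)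
  finally show ?thesis .
qed

lemma tab_m1_le_tab_y: "crystal_le lam n tab_m1 tab_y"
proof -
  have "crystal_le lam n tab_m1 (W (Suc a) b (Suc 0) d (Suc a) b 0 0 (Suc (Suc b)))"
    unfolding tab_m1_def
    by (rule W_le_of_F_tab[OF F_tab_window_bottom_3]) (use parts a_pos in \<open>auto intro!: W_in_B\<close>)
  also have "crystal_le lam n \<dots> (W (Suc a) b (Suc 0) d a (Suc b) 0 0 (Suc (Suc b)))"
    by (rule W_le_of_F_tab[OF F_tab_window_middle_2]) (use parts a_pos in \<open>auto intro!: W_in_B\<close>)
  also have "crystal_le lam n \<dots> tab_y"
    unfolding tab_y_def
    by (rule W_le_of_F_tab[OF F_tab_window_top_1]) (use parts a_pos in \<open>auto intro!: W_in_B\<close>)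
  finally show ?thesis .
qed

lemma tab_m2_le_tab_x: "crystal_le lam n tab_m2 tab_x"
  unfolding tab_m2_def tab_x_def
  by (rule W_le_of_F_tab[OF F_tab_window_top_2]) (use parts a_pos in \<open>auto intro!: W_in_B\<close>)

lemma tab_m2_le_tab_y: "crystal_le lam n tab_m2 tab_y"
proof -
  have "crystal_le lam n tab_m2 (W a (Suc (Suc b)) 0 d a (Suc b) 0 0 (Suc (Suc b)))"
    unfolding tab_m2_def
    by (rule W_le_of_F_tab[OF F_tab_window_bottom_3]) (use parts a_pos in \<open>auto intro!: W_in_B\<close>)
  also have "crystal_le lam n \<dots> tab_y"
    unfolding tab_y_def
    by (rule W_le_of_F_tab[OF F_tab_window_top_2]) (use parts a_pos in \<open>auto intro!: W_in_B\<close>)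
  finally show ?thesis .
qed

lemma tab_x_cell_le_max:
  assumes "r < length tab_x" "c < length (tab_x ! r)"
  shows "tab_x ! r ! c \<le> max (tab_m1 ! r ! c) (tab_m2 ! r ! c)"
proof (cases "r = k")
  case True
  then have "c < a + b + d + 2"
    using assms window_fits unfolding tab_x_def by (simp add: nth_window_tableau block_row_def)
  then show ?thesis
    using True window_fits unfolding tab_x_def tab_m1_def tab_m2_def
    by (simp add: nth_window_tableau nth_block_row)
next
  case False
  then have "tab_x ! r = tab_m2 ! r"
    using assms window_fits unfolding tab_x_def tab_m2_def
    by (simp add: nth_window_tableau length_window_tableau)
  then show ?thesis by simp
qed

text \<open>F_{k+3} raises the rightmost unmatched k+3 of tab_x, which lies in the top row; the first
  letter k+3 of the bottom row stays put.\<close>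
lemma not_tab_x_le_tab_y: "\<not> crystal_le lam n tab_x tab_y"
proof (rule not_crystal_le_if_stuck_cell[where j = "length (word_below lam k)" and v = "k + 4"])
  show "reading_word tab_y = (reading_word tab_x)[length (word_below lam k) := k + 4]"
    unfolding tab_x_def tab_y_def
    by (simp add: reading_word_window_tableau block_row_def list_update_append)
  have x_cell: "reading_word tab_x ! length (word_below lam k) = k + 3"
    unfolding tab_x_def by (simp add: reading_word_window_tableau block_row_def nth_append)
  then show "reading_word tab_x ! length (word_below lam k) \<noteq> k + 4" by simp
  show "length (word_below lam k) < length (reading_word tab_x)"
    unfolding tab_x_def by (simp add: reading_word_window_tableau block_row_def)
  fix T assume "F_tab (reading_word tab_x ! length (word_below lam k)) tab_x = Some T"
  then have "F_tab (k + 3) tab_x = Some T" by (simp only: x_cell)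
  then have "T = W a (Suc b) 0 (Suc d) a (Suc b) 0 (Suc 0) (Suc b)"
    using F_tab_window_top_3[of "Suc b" "Suc b" 0 0 k lam a "Suc b" d a "Suc 0"]
    unfolding tab_x_def by simp
  then show "reading_word T ! length (word_below lam k) = reading_word tab_x ! length (word_below lam k)"
    unfolding x_cell by (simp add: reading_word_window_tableau block_row_def nth_append)
qed

theorem not_lattice: "\<not> is_lattice_on (B lam n) (crystal_le lam n)"
  using not_lattice_if_lower_bounds_cover[OF tab_m1_le_tab_x tab_m1_le_tab_y tab_m2_le_tab_x
      tab_m2_le_tab_y tab_x_cell_le_max not_tab_x_le_tab_y] .

end

theorem lemma5p4:
  fixes lam :: "nat list" and n p :: nat
  assumes "is_partition lam"
    and "length lam \<le> n"
    and "1 \<le> p" and "p \<le> length lam - 2"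
    and "lam ! (p - 1) > lam ! p"
    and "lam ! p \<ge> lam ! (p + 1)"
    and "lam ! (p + 1) \<ge> 2"
  shows "\<not> is_lattice_on (B lam n) (crystal_le lam n)"
proof -
  obtain k where p: "p = Suc k" using \<open>1 \<le> p\<close> by (cases p) auto
  interpret nonlattice_window lam n k "lam ! (k + 1) - lam ! (k + 2) + 1" "lam ! (k + 2) - 2"
      "lam ! k - lam ! (k + 1) - 1"
    by unfold_locales (use assms p in auto)
  show ?thesis by (rule not_lattice)
qed

end
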